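(* Let $(X,d)$ be a nonempty metric space, let $F:X\rightarrow K(X)$ be a set-valued uniform pointwise contraction with modulus $\beta\in[0,1)$, and let $p:[0,1]\to X$ be a continuous path with $l(p)<\infty$. Then $l(F\circ p)\le\beta\, l(p)<\infty$, where $$l(F\circ p):=\sup_{\pi\in\Pi}\sum_{i=1}^n H(F(p(t_{i-1})),F(p(t_i))).$$
   Context: $\Pi$ is the set of finite partitions $0=t_0<t_1<\cdots<t_n=1$ of $[0,1]$. The length of a path $p$ is $l(p)=\sup_{\pi\in\Pi}\sum_{i=1}^n d(p(t_{i-1}),p(t_i))$. $K(X)$ is the set of nonempty compact subsets of $X$; $H$ is the Hausdorff distance $H(A,B)=\max\{\sup_{a\in A}\inf_{b\in B}d(a,b),\sup_{b\in B}\inf_{a\in A}d(a,b)\}$. $F$ is a set-valued uniform pointwise contraction with modulus $\beta$ if every $x\in X$ has an open neighborhood $N(x)$ with $H(F(x),F(y))\le\beta\, d(x,y)$ for all $y\in N(x)$. *)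

theory Defs
  imports "HOL-Analysis.Analysis"
begin

text \<open>Hausdorff distance, as in the paper (meaningful for nonempty compact sets).\<close>
definition hausdorff_dist :: "'a::metric_space set \<Rightarrow> 'a set \<Rightarrow> real" where
  "hausdorff_dist A B =
     max (SUP a\<in>A. INF b\<in>B. dist a b) (SUP b\<in>B. INF a\<in>A. dist a b)"

definition partitions01 :: "(nat \<times> (nat \<Rightarrow> real)) set" where
  "partitions01 = {(n, t). n \<ge> 1 \<and> t 0 = 0 \<and> t n = 1 \<and> (\<forall>i<n. t i < t (Suc i))}"

text \<open>Variation of p on [0,1] w.r.t. a distance-like function D, valued in ereal
  (so that infinite length is representable).\<close>
definition variation :: "('a \<Rightarrow> 'a \<Rightarrow> real) \<Rightarrow> (real \<Rightarrow> 'a) \<Rightarrow> ereal" where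
  "variation D p = (SUP nt\<in>partitions01.
      ereal (\<Sum>i\<in>{1..fst nt}. D (p (snd nt (i - 1))) (p (snd nt i))))"

definition path_length :: "(real \<Rightarrow> 'a::metric_space) \<Rightarrow> ereal" where
  "path_length p = variation dist p"

definition set_valued_path_length :: "('a::metric_space \<Rightarrow> 'a set) \<Rightarrow> (real \<Rightarrow> 'a) \<Rightarrow> ereal" where
  "set_valued_path_length F p = variation (\<lambda>x y. hausdorff_dist (F x) (F y)) p"

definition uniform_pointwise_contraction ::
  "('a::metric_space \<Rightarrow> 'a set) \<Rightarrow> real \<Rightarrow> bool" where
  "uniform_pointwise_contraction F \<beta> \<longleftrightarrow>
     (\<forall>x. \<exists>N. open N \<and> x \<in> N \<and>
        (\<forall>y\<in>N. hausdorff_dist (F x) (F y) \<le> \<beta> * dist x y))"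

end

theory Submission
  imports Defs
begin

(* Around every point of [a, b], F \<circ> p is \<beta>-Lipschitz with respect to the distance of the
   p-values (pointwise contraction plus continuity of p). Bolzano's bisection principle turns
   this local property into a global one: between a \<le> b there are points a = s_0 \<le> ... \<le> s_m = b
   with H(F(p a), F(p b)) \<le> \<beta> \<Sigma> d(p s_(j-1), p s_j), using the triangle inequality of H.
   Inserting such points into every interval of a partition bounds its Hausdorff sum by \<beta> times
   the length sum of p over a finer partition, hence by \<beta> l(p). *)

fun chain_sum :: "('a \<Rightarrow> 'a \<Rightarrow> real) \<Rightarrow> 'a list \<Rightarrow> real" where
  "chain_sum f (x # y # zs) = f x y + chain_sum f (y # zs)"
| "chain_sum f _ = 0"

lemma chain_sum_conv_sum: "chain_sum f xs = (\<Sum>i<length xs - 1. f (xs ! i) (xs ! Suc i))"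
proof (induction xs rule: induct_list012)
  case (3 x y zs)
  then show ?case by (simp add: sum.lessThan_Suc_shift del: sum.lessThan_Suc)
qed auto

lemma chain_sum_Cons: "ys \<noteq> [] \<Longrightarrow> chain_sum f (x # ys) = f x (hd ys) + chain_sum f ys"
  by (cases ys) auto

lemma chain_sum_append:
  assumes "xs \<noteq> []" "ys \<noteq> []" "last xs = hd ys"
  shows "chain_sum f (xs @ tl ys) = chain_sum f xs + chain_sum f ys"
  using assms
proof (induction xs rule: induct_list012)
  case (2 x)
  then show ?case by (cases ys rule: list.exhaust[case_product list.exhaust[of "tl ys"]]) auto
qed auto

lemma chain_sum_remdups_adj:
  assumes "\<And>x. f x x = 0"
  shows "chain_sum f (remdups_adj xs) = chain_sum f xs"
proof (induction xs rule: induct_list012)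
  case (3 x y zs)
  then show ?case using assms by (cases "x = y") (auto simp: chain_sum_Cons)
qed auto

(* Partitions of [a, b] as sorted lists from a to b; repeated points are harmless for sums of
   functions vanishing on the diagonal. *)
definition ascending_chain :: "'a::linorder list \<Rightarrow> 'a \<Rightarrow> 'a \<Rightarrow> bool" where
  "ascending_chain ys a b \<longleftrightarrow> ys \<noteq> [] \<and> sorted ys \<and> hd ys = a \<and> last ys = b"

lemma ascending_chain_subset:
  assumes "ascending_chain ys a b"
  shows "set ys \<subseteq> {a..b}"
proof
  fix x assume "x \<in> set ys"
  then obtain i where "i < length ys" "x = ys ! i" by (auto simp: in_set_conv_nth)
  then show "x \<in> {a..b}"
    using assms by (auto simp: ascending_chain_def hd_conv_nth last_conv_nth intro!: sorted_nth_mono)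
qed

lemma ascending_chain_Cons_Cons:
  "ascending_chain (x # y # zs) a b \<longleftrightarrow> x = a \<and> x \<le> y \<and> ascending_chain (y # zs) y b"
  by (auto simp: ascending_chain_def)

lemma ascending_chain_append:
  assumes "ascending_chain xs a b" "ascending_chain ys b c"
  shows "ascending_chain (xs @ tl ys) a c"
proof -
  have "set (tl ys) \<subseteq> set ys"
    by (cases ys) auto
  then have "set xs \<subseteq> {a..b}" "set (tl ys) \<subseteq> {b..c}"
    using ascending_chain_subset[OF assms(1)] ascending_chain_subset[OF assms(2)] by auto
  then have "sorted (xs @ tl ys)"
    using assms unfolding ascending_chain_def sorted_append
    by (meson atLeastAtMost_iff order_trans sorted_tl subsetD)
  moreover have "last (xs @ tl ys) = c"
    using assms unfolding ascending_chain_def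
    by (metis last_append last_tl list.collapse last_ConsL)
  ultimately show ?thesis
    using assms by (simp add: ascending_chain_def)
qed

lemma partition_ascending_chain:
  assumes "(n, t) \<in> partitions01"
  shows "ascending_chain (map t [0..<Suc n]) 0 1"
  using assms unfolding partitions01_def ascending_chain_def
  by (auto simp: sorted_iff_nth_Suc hd_map last_map less_imp_le simp del: upt_Suc)

lemma sum_partition_eq_chain_sum:
  "(\<Sum>i\<in>{1..n}. f (t (i - 1)) (t i)) = chain_sum f (map t [0..<Suc n])"
  by (simp add: sum.atLeast1_atMost_eq chain_sum_conv_sum del: upt_Suc)

lemma remdups_adj_partition:
  fixes ys :: "real list"
  assumes "ascending_chain ys 0 1"
  shows "(length (remdups_adj ys) - 1, (!) (remdups_adj ys)) \<in> partitions01"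
proof -
  define zs where "zs = remdups_adj ys"
  have zs: "zs \<noteq> []" "sorted zs" "hd zs = 0" "last zs = 1"
    using assms by (simp_all add: zs_def ascending_chain_def)
  then have "length zs \<ge> 2"
    by (cases zs rule: list.exhaust[case_product list.exhaust[of "tl zs"]]) auto
  moreover have "zs ! i < zs ! Suc i" if "Suc i < length zs" for i
    using that zs(2) remdups_adj_adjacent[of i ys]
    by (auto simp: zs_def sorted_iff_nth_Suc order_less_le)
  ultimately show ?thesis
    using zs by (auto simp: partitions01_def hd_conv_nth last_conv_nth simp flip: zs_def)
qed

lemma variation_eq_SUP_ascending_chains:
  assumes "\<And>x. D x x = 0"
  shows "variation D p =
    (SUP ys\<in>{ys. ascending_chain ys 0 1}. ereal (chain_sum (\<lambda>s t. D (p s) (p t)) ys))"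
  unfolding variation_def
proof (rule antisym; rule SUP_mono)
  fix nt assume "nt \<in> partitions01"
  then show "\<exists>ys\<in>{ys. ascending_chain ys 0 1}.
      ereal (\<Sum>i\<in>{1..fst nt}. D (p (snd nt (i - 1))) (p (snd nt i)))
      \<le> ereal (chain_sum (\<lambda>s t. D (p s) (p t)) ys)"
    using partition_ascending_chain[of "fst nt" "snd nt"]
      sum_partition_eq_chain_sum[of "\<lambda>s t. D (p s) (p t)" "snd nt" "fst nt"]
    by (intro bexI[of _ "map (snd nt) [0..<Suc (fst nt)]"]) simp_all
next
  fix ys :: "real list" assume "ys \<in> {ys. ascending_chain ys 0 1}"
  then have chain: "ascending_chain ys 0 1" by simp
  define zs where "zs = remdups_adj ys"
  define n where "n = length zs - 1"
  have "(n, (!) zs) \<in> partitions01"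
    using remdups_adj_partition[OF chain] by (simp add: zs_def n_def)
  moreover have "map ((!) zs) [0..<Suc n] = zs"
    using chain by (simp add: n_def zs_def ascending_chain_def map_nth del: upt_Suc)
  then have "chain_sum (\<lambda>s t. D (p s) (p t)) ys = (\<Sum>i\<in>{1..n}. D (p (zs ! (i - 1))) (p (zs ! i)))"
    using sum_partition_eq_chain_sum[of "\<lambda>s t. D (p s) (p t)" "(!) zs" n]
      chain_sum_remdups_adj[of "\<lambda>s t. D (p s) (p t)" ys] assms
    by (simp add: zs_def del: upt_Suc)
  ultimately show "\<exists>nt\<in>partitions01. ereal (chain_sum (\<lambda>s t. D (p s) (p t)) ys)
      \<le> ereal (\<Sum>i\<in>{1..fst nt}. D (p (snd nt (i - 1))) (p (snd nt i)))"
    by force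
qed

lemma chain_sum_le_variation:
  assumes "ascending_chain ys 0 1" "\<And>x. D x x = 0"
  shows "ereal (chain_sum (\<lambda>s t. D (p s) (p t)) ys) \<le> variation D p"
  using assms by (auto simp: variation_eq_SUP_ascending_chains intro: SUP_upper)

lemma hausdorff_dist_eq_SUP_infdist:
  assumes "A \<noteq> {}" "B \<noteq> {}"
  shows "hausdorff_dist A B = max (SUP a\<in>A. infdist a B) (SUP b\<in>B. infdist b A)"
  using assms by (simp add: hausdorff_dist_def infdist_notempty dist_commute)

lemma hausdorff_dist_commute: "hausdorff_dist A B = hausdorff_dist B A"
  by (simp add: hausdorff_dist_def dist_commute max.commute)

lemma hausdorff_dist_self: "A \<noteq> {} \<Longrightarrow> hausdorff_dist A A = 0"
  by (simp add: hausdorff_dist_eq_SUP_infdist)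

lemma bdd_above_infdist_image:
  assumes "bounded A" "B \<noteq> {}"
  shows "bdd_above ((\<lambda>a. infdist a B) ` A)"
proof -
  obtain b where "b \<in> B" using assms(2) by blast
  moreover obtain e where "\<forall>a\<in>A. dist b a \<le> e" using assms(1) bounded_any_center by blast
  ultimately show ?thesis
    by (intro bdd_aboveI2[of _ _ e]) (metis dist_commute infdist_le2)
qed

lemma SUP_infdist_triangle:
  assumes "A \<noteq> {}" "B \<noteq> {}" "C \<noteq> {}" "bounded A" "bounded B"
  shows "(SUP a\<in>A. infdist a C) \<le> (SUP a\<in>A. infdist a B) + (SUP b\<in>B. infdist b C)"
proof (rule cSUP_least[OF assms(1)])
  fix a assume "a \<in> A"
  have "infdist a C - (SUP b\<in>B. infdist b C) \<le> dist a b" if "b \<in> B" for b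
    using infdist_triangle[of a C b] cSUP_upper[OF that bdd_above_infdist_image[OF assms(5,3)]]
    by linarith
  then have "infdist a C - (SUP b\<in>B. infdist b C) \<le> infdist a B"
    using assms(2) by (simp add: infdist_notempty cINF_greatest)
  also have "infdist a B \<le> (SUP a\<in>A. infdist a B)"
    using cSUP_upper[OF \<open>a \<in> A\<close> bdd_above_infdist_image[OF assms(4,2)]] .
  finally show "infdist a C \<le> (SUP a\<in>A. infdist a B) + (SUP b\<in>B. infdist b C)"
    by linarith
qed

lemma hausdorff_dist_triangle:
  assumes "A \<noteq> {}" "B \<noteq> {}" "C \<noteq> {}" "bounded A" "bounded B" "bounded C"
  shows "hausdorff_dist A C \<le> hausdorff_dist A B + hausdorff_dist B C"
  using SUP_infdist_triangle[of A B C] SUP_infdist_triangle[of C B A] assms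
  by (simp add: hausdorff_dist_eq_SUP_infdist) linarith

lemma uniform_pointwise_contraction_continuous_on:
  fixes g :: "'b::metric_space \<Rightarrow> 'a::metric_space"
  assumes "uniform_pointwise_contraction F \<beta>" "continuous_on S g" "c \<in> S"
  obtains \<delta> where "\<delta> > 0"
    "\<And>y. y \<in> S \<Longrightarrow> dist y c < \<delta> \<Longrightarrow> hausdorff_dist (F (g c)) (F (g y)) \<le> \<beta> * dist (g c) (g y)"
proof -
  obtain N where N: "open N" "g c \<in> N" "\<forall>y\<in>N. hausdorff_dist (F (g c)) (F y) \<le> \<beta> * dist (g c) y"
    using assms(1) unfolding uniform_pointwise_contraction_def by blast
  obtain e where "e > 0" "ball (g c) e \<subseteq> N"
    using N(1,2) open_contains_ball by blast
  moreover obtain \<delta> where "\<delta> > 0" "\<forall>y\<in>S. dist y c < \<delta> \<longrightarrow> dist (g y) (g c) < e"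
    using assms(2,3) \<open>e > 0\<close> unfolding continuous_on_iff by blast
  ultimately show thesis
    using N(3) by (intro that[of \<delta>]) (auto simp: dist_commute subset_iff)
qed

lemma hausdorff_dist_le_chain_sum:
  fixes F :: "'a::metric_space \<Rightarrow> 'a set" and p :: "real \<Rightarrow> 'a"
  assumes F: "\<And>x. F x \<noteq> {}" "\<And>x. bounded (F x)"
    and contraction: "uniform_pointwise_contraction F \<beta>"
    and p: "continuous_on {a..b} p" and "a \<le> b"
  shows "\<exists>ys. ascending_chain ys a b \<and>
    hausdorff_dist (F (p a)) (F (p b)) \<le> \<beta> * chain_sum (\<lambda>s t. dist (p s) (p t)) ys"
proof -
  define G where "G s t = hausdorff_dist (F (p s)) (F (p t))" for s t
  define D where "D s t = dist (p s) (p t)" for s t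
  have G_triangle: "G r t \<le> G r s + G s t" for r s t
    unfolding G_def by (rule hausdorff_dist_triangle) (simp_all add: F)
  \<comment> \<open>Bolzano's local hypothesis also covers intervals leaving [a, b]; the guard makes them trivial.\<close>
  define P where "P u v \<longleftrightarrow> a \<le> u \<longrightarrow> v \<le> b \<longrightarrow>
    (\<exists>ys. ascending_chain ys u v \<and> G u v \<le> \<beta> * chain_sum D ys)" for u v
  have "P a b"
    using \<open>a \<le> b\<close>
  proof (induction rule: Bolzano[where P = P])
    case (trans r s t)
    show ?case unfolding P_def
    proof (intro impI)
      assume "a \<le> r" "t \<le> b"
      with trans obtain xs ys where chains: "ascending_chain xs r s" "ascending_chain ys s t"
        and "G r s \<le> \<beta> * chain_sum D xs" "G s t \<le> \<beta> * chain_sum D ys"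
        unfolding P_def by auto
      moreover have "chain_sum D (xs @ tl ys) = chain_sum D xs + chain_sum D ys"
        using chains by (intro chain_sum_append) (auto simp: ascending_chain_def)
      ultimately show "\<exists>zs. ascending_chain zs r t \<and> G r t \<le> \<beta> * chain_sum D zs"
        using G_triangle[where r = r and s = s and t = t] ascending_chain_append[OF chains]
        by (intro exI[of _ "xs @ tl ys"]) (simp add: distrib_left)
    qed
  next
    case (local x)
    then obtain \<delta> where "\<delta> > 0"
      and \<delta>: "\<And>y. y \<in> {a..b} \<Longrightarrow> dist y x < \<delta> \<Longrightarrow> G x y \<le> \<beta> * D x y"
      using uniform_pointwise_contraction_continuous_on[OF contraction p, of x]
      unfolding G_def D_def by auto
    have "P u v" if "u \<le> x" "x \<le> v" "v - u < \<delta>" for u v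
      unfolding P_def
    proof (intro impI)
      assume "a \<le> u" "v \<le> b"
      with that have "G x u \<le> \<beta> * D x u" "G x v \<le> \<beta> * D x v"
        by (auto intro!: \<delta> simp: dist_real_def)
      with G_triangle[where r = u and s = x and t = v]
      show "\<exists>ys. ascending_chain ys u v \<and> G u v \<le> \<beta> * chain_sum D ys"
        using that by (intro exI[of _ "[u, x, v]"])
          (auto simp: ascending_chain_def distrib_left G_def D_def hausdorff_dist_commute dist_commute)
    qed
    with \<open>\<delta> > 0\<close> show ?case by blast
  qed
  then show ?thesis unfolding P_def G_def D_def by simp
qed

lemma ascending_chain_refinement:
  fixes F :: "'a::metric_space \<Rightarrow> 'a set" and p :: "real \<Rightarrow> 'a"
  assumes F: "\<And>x. F x \<noteq> {}" "\<And>x. bounded (F x)"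
    and contraction: "uniform_pointwise_contraction F \<beta>"
  shows "continuous_on {a..b} p \<Longrightarrow> ascending_chain xs a b \<Longrightarrow>
    \<exists>ys. ascending_chain ys a b \<and>
      chain_sum (\<lambda>s t. hausdorff_dist (F (p s)) (F (p t))) xs
        \<le> \<beta> * chain_sum (\<lambda>s t. dist (p s) (p t)) ys"
proof (induction xs arbitrary: a rule: induct_list012)
  case 1
  then show ?case by (simp add: ascending_chain_def)
next
  case (2 x)
  then show ?case by (intro exI[of _ "[x]"]) (simp add: ascending_chain_def)
next
  case (3 x y zs)
  define G where "G s t = hausdorff_dist (F (p s)) (F (p t))" for s t
  define D where "D s t = dist (p s) (p t)" for s t
  have "a = x" "x \<le> y" and tail: "ascending_chain (y # zs) y b"
    using "3.prems"(2) by (simp_all add: ascending_chain_Cons_Cons)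
  then have "{x..y} \<subseteq> {a..b}" "{y..b} \<subseteq> {a..b}"
    using ascending_chain_subset[OF tail] by auto
  then have "continuous_on {x..y} p" "continuous_on {y..b} p"
    using "3.prems"(1) continuous_on_subset by blast+
  obtain ys where ys: "ascending_chain ys y b" "chain_sum G (y # zs) \<le> \<beta> * chain_sum D ys"
    using "3.IH"(2)[OF \<open>continuous_on {y..b} p\<close> tail] unfolding G_def D_def by blast
  obtain cs where cs: "ascending_chain cs x y" "G x y \<le> \<beta> * chain_sum D cs"
    using hausdorff_dist_le_chain_sum[OF F contraction \<open>continuous_on {x..y} p\<close> \<open>x \<le> y\<close>]
    unfolding G_def D_def by blast
  have "chain_sum D (cs @ tl ys) = chain_sum D cs + chain_sum D ys"
    using cs(1) ys(1) by (intro chain_sum_append) (auto simp: ascending_chain_def)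
  then have "chain_sum G (x # y # zs) \<le> \<beta> * chain_sum D (cs @ tl ys)"
    using cs(2) ys(2) by (simp add: distrib_left)
  then show ?case
    using ascending_chain_append[OF cs(1) ys(1)] \<open>a = x\<close> unfolding G_def D_def by blast
qed

theorem lemma13:
  fixes F :: "'a::metric_space \<Rightarrow> 'a set" and \<beta> :: real and p :: "real \<Rightarrow> 'a"
  assumes "\<And>x. F x \<noteq> {} \<and> compact (F x)"
    and "uniform_pointwise_contraction F \<beta>"
    and "0 \<le> \<beta>" and "\<beta> < 1"
    and "continuous_on {0..1} p"
    and "path_length p < \<infinity>"
  shows "set_valued_path_length F p \<le> ereal \<beta> * path_length p
         \<and> ereal \<beta> * path_length p < \<infinity>"
proof
  define G where "G s t = hausdorff_dist (F (p s)) (F (p t))" for s t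
  define D where "D s t = dist (p s) (p t)" for s t
  have F: "F x \<noteq> {}" "bounded (F x)" for x
    using assms(1) compact_imp_bounded by auto
  have "set_valued_path_length F p = (SUP xs\<in>{xs. ascending_chain xs 0 1}. ereal (chain_sum G xs))"
    unfolding set_valued_path_length_def G_def
    by (rule variation_eq_SUP_ascending_chains) (simp add: hausdorff_dist_self F)
  also have "\<dots> \<le> ereal \<beta> * path_length p"
  proof (rule SUP_least)
    fix xs :: "real list" assume "xs \<in> {xs. ascending_chain xs 0 1}"
    then obtain ys where ys: "ascending_chain ys 0 1" "chain_sum G xs \<le> \<beta> * chain_sum D ys"
      using ascending_chain_refinement[OF F assms(2,5)] unfolding G_def D_def by blast
    have "ereal (chain_sum D ys) \<le> path_length p"
      unfolding path_length_def D_def using ys(1) by (rule chain_sum_le_variation) simp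
    then have "ereal \<beta> * ereal (chain_sum D ys) \<le> ereal \<beta> * path_length p"
      using assms(3) by (intro ereal_mult_left_mono) simp_all
    with ys(2) show "ereal (chain_sum G xs) \<le> ereal \<beta> * path_length p"
      by (metis ereal_less_eq(3) order_trans times_ereal.simps(1))
  qed
  finally show "set_valued_path_length F p \<le> ereal \<beta> * path_length p" .
  show "ereal \<beta> * path_length p < \<infinity>"
    using assms(3,6) by (cases "path_length p") auto
qed

end
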